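(* Under the standing assumptions below, if $n\ge 1/\alpha-1$, then $\hat Q^{\mathrm{oracle}}_{1-\alpha}<\frac{n}{\sqrt{n+1}}$ almost surely.
   Context: Setting: $n\ge 2$, $d\ge 1$ integers, $\alpha\in(0,1)$, $[m]:=\{1,\dots,m\}$. $E^1,\dots,E^{n+1}$ are exchangeable random vectors in $\mathbb{R}^d$. Assumption A: for each $j\in[d]$, the distribution of $E^i_j$ has no point masses, $E^i_j\ge0$ a.s., $\mathbb{E}[E^i_j]<\infty$, $0<\mathrm{Var}(E^i_j)<\infty$, and $E^1_j,\dots,E^{n+1}_j$ are a.s. pairwise distinct. Quantile: for $x=(x_1,\dots,x_n)\in\mathbb{R}^n$, $\hat Q_{1-\alpha}(x)$ is the $\lceil(1-\alpha)(n+1)\rceil$-th smallest value of the multiset $\{x_1,\dots,x_n,+\infty\}$. Oracle statistics: $\hat\mu^{\mathrm{oracle}}_j=\frac1{n+1}\sum_{i=1}^{n+1}E^i_j$, $\hat\sigma^{\mathrm{oracle}}_j=\sqrt{\frac1n\sum_{i=1}^{n+1}(E^i_j-\hat\mu^{\mathrm{oracle}}_j)^2}$. $\Phi(t;\mu,\sigma):=\max_{1\le j\le d}\frac{t_j-\mu_j}{\sigma_j}$. $S^i_{\mathrm{oracle}}:=\Phi(E^i;\hat\mu^{\mathrm{oracle}},\hat\sigma^{\mathrm{oracle}})$, and $\hat Q^{\mathrm{oracle}}_{1-\alpha}:=\hat Q_{1-\alpha}(S^1_{\mathrm{oracle}},\dots,S^n_{\mathrm{oracle}})$. *)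

theory Defs
  imports "HOL-Probability.Probability"
begin

definition quantile_hat :: "real \<Rightarrow> nat \<Rightarrow> (nat \<Rightarrow> real) \<Rightarrow> ereal" where
  "quantile_hat \<alpha> n x =
     sort (map (\<lambda>i. ereal (x i)) [1..<Suc n] @ [\<infinity>]) ! (nat \<lceil>(1 - \<alpha>) * real (Suc n)\<rceil> - 1)"

definition mu_oracle :: "nat \<Rightarrow> (nat \<Rightarrow> real ^ 'd) \<Rightarrow> 'd \<Rightarrow> real" where
  "mu_oracle n E j = (1 / real (Suc n)) * (\<Sum>i = 1..Suc n. E i $ j)"

definition sigma_oracle :: "nat \<Rightarrow> (nat \<Rightarrow> real ^ 'd) \<Rightarrow> 'd \<Rightarrow> real" where
  "sigma_oracle n E j = sqrt ((1 / real n) * (\<Sum>i = 1..Suc n. (E i $ j - mu_oracle n E j)\<^sup>2))"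

definition Phi :: "real ^ 'd \<Rightarrow> ('d::finite \<Rightarrow> real) \<Rightarrow> ('d \<Rightarrow> real) \<Rightarrow> real" where
  "Phi t \<mu> \<sigma> = Max (range (\<lambda>j. (t $ j - \<mu> j) / \<sigma> j))"

definition score_oracle :: "nat \<Rightarrow> (nat \<Rightarrow> real ^ 'd::finite) \<Rightarrow> nat \<Rightarrow> real" where
  "score_oracle n E i = Phi (E i) (mu_oracle n E) (sigma_oracle n E)"

definition Q_oracle :: "real \<Rightarrow> nat \<Rightarrow> (nat \<Rightarrow> real ^ 'd::finite) \<Rightarrow> ereal" where
  "Q_oracle \<alpha> n E = quantile_hat \<alpha> n (score_oracle n E)"

end

theory Submission
  imports Defs
begin

text \<open>The bound is deterministic: by Samuelson's inequality no point of a sample of \<open>n + 1\<close>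
  reals lies more than \<open>n / sqrt (n + 1)\<close> standard deviations (normalised by \<open>n\<close>) from the
  sample mean, with equality only if the other \<open>n\<close> points coincide. Almost sure distinctness
  of the coordinates therefore makes every oracle score strictly smaller than this bound, and
  \<open>n \<ge> 1/\<alpha> - 1\<close> forces the quantile rank to be at most \<open>n\<close>, so that the quantile is one of the
  scores and not \<open>\<infinity>\<close>.\<close>

lemma samuelson_inequality_strict:
  fixes x :: "'a \<Rightarrow> real"
  assumes "finite I" and card: "card I = Suc n" and "k \<in> I"
    and "i \<in> I" "j \<in> I" "i \<noteq> k" "j \<noteq> k" "x i \<noteq> x j"
  defines "m \<equiv> (\<Sum>l\<in>I. x l) / card I"
  shows "real (Suc n) * (x k - m)\<^sup>2 < real n * (\<Sum>l\<in>I. (x l - m)\<^sup>2)"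
proof -
  define d where "d l = x l - m" for l
  define A where "A = I - {k}"
  define c where "c = - d k / n"
  have "finite A" and card_A: "card A = n" using assms(1-3) by (auto simp: A_def)
  have "i \<in> A" using \<open>i \<in> I\<close> \<open>i \<noteq> k\<close> by (simp add: A_def)
  then have n_pos: "real n > 0" using \<open>finite A\<close> card_A card_gt_0_iff by force
  have split: "(\<Sum>l\<in>I. f l) = f k + (\<Sum>l\<in>A. f l)" for f :: "'a \<Rightarrow> real"
    using assms(1,3) unfolding A_def by (rule sum.remove)
  have "(\<Sum>l\<in>I. d l) = 0"
    using card by (simp add: d_def m_def sum_subtractf)
  then have sum_A: "(\<Sum>l\<in>A. d l) = - d k" using split[of d] by linarith
  \<comment> \<open>strictness: the deviations over \<open>A\<close> are not all equal to their mean \<open>c\<close>\<close>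
  have "d i \<noteq> d j" using \<open>x i \<noteq> x j\<close> by (simp add: d_def)
  then obtain l where "l \<in> A" "d l \<noteq> c"
    using assms(4-7) unfolding A_def by blast
  then have "0 < (\<Sum>l\<in>A. (d l - c)\<^sup>2)"
    by (intro sum_pos2[OF \<open>finite A\<close>]) auto
  also have "(\<Sum>l\<in>A. (d l - c)\<^sup>2) = (\<Sum>l\<in>A. (d l)\<^sup>2) - 2 * c * (\<Sum>l\<in>A. d l) + n * c\<^sup>2"
    by (simp add: power2_diff sum_subtractf sum.distrib sum_distrib_left sum_distrib_right card_A mult_ac)
  also have "\<dots> = (\<Sum>l\<in>A. (d l)\<^sup>2) - (d k)\<^sup>2 / n"
    using n_pos by (simp add: sum_A c_def field_simps power2_eq_square)
  finally have "(d k)\<^sup>2 < n * (\<Sum>l\<in>A. (d l)\<^sup>2)"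
    using n_pos by (simp add: field_simps)
  then show ?thesis
    using split[of "\<lambda>l. (d l)\<^sup>2"] by (simp add: d_def algebra_simps)
qed

lemma standardized_less_of_samuelson:
  fixes d T :: real
  assumes samuelson: "real (Suc n) * d\<^sup>2 < real n * T"
  shows "d / sqrt (T / n) < n / sqrt (Suc n)"
proof -
  have "real n * T > 0"
    using samuelson by (smt (verit) mult_nonneg_nonneg of_nat_0_le_iff zero_le_power2)
  then have "n > 0" and "T > 0" by (simp_all add: zero_less_mult_iff)
  show ?thesis
  proof (cases "d \<le> 0")
    case True
    then have "d / sqrt (T / n) \<le> 0" using \<open>T > 0\<close> by (intro divide_nonpos_nonneg) auto
    also have "0 < n / sqrt (Suc n)" using \<open>n > 0\<close> by simp
    finally show ?thesis .
  next
    case False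
    have "d * sqrt (Suc n) = sqrt (Suc n * d\<^sup>2)"
      using False by (simp add: real_sqrt_mult)
    also have "\<dots> < sqrt (n * T)" using samuelson by simp
    also have "\<dots> = n * sqrt (T / n)"
      using \<open>n > 0\<close> by (simp add: real_sqrt_mult real_sqrt_divide field_simps)
    finally show ?thesis
      using \<open>n > 0\<close> \<open>T > 0\<close> by (simp add: field_simps)
  qed
qed

lemma score_oracle_less:
  fixes E :: "nat \<Rightarrow> real ^ 'd::finite"
  assumes "n \<ge> 2" and "i \<in> {1..Suc n}"
    and inj: "\<And>j. inj_on (\<lambda>l. E l $ j) {1..Suc n}"
  shows "score_oracle n E i < real n / sqrt (real (Suc n))"
proof -
  have "(E i $ j - mu_oracle n E j) / sigma_oracle n E j < real n / sqrt (real (Suc n))" for j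
  proof -
    have "\<not> card ({1..Suc n} - {i}) \<le> Suc 0"
      using \<open>n \<ge> 2\<close> \<open>i \<in> {1..Suc n}\<close> by simp
    then obtain l l' where "l \<in> {1..Suc n} - {i}" "l' \<in> {1..Suc n} - {i}" "l \<noteq> l'"
      by (metis card_le_Suc0_iff_eq finite_Diff finite_atLeastAtMost)
    then have "real (Suc n) * (E i $ j - mu_oracle n E j)\<^sup>2
        < real n * (\<Sum>l = 1..Suc n. (E l $ j - mu_oracle n E j)\<^sup>2)"
      using samuelson_inequality_strict[of "{1..Suc n}" n i l l' "\<lambda>l. E l $ j"]
        inj_onD[OF inj] \<open>i \<in> {1..Suc n}\<close> by (auto simp: mu_oracle_def)
    moreover have "sigma_oracle n E j = sqrt ((\<Sum>l = 1..Suc n. (E l $ j - mu_oracle n E j)\<^sup>2) / n)"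
      by (simp add: sigma_oracle_def)
    ultimately show ?thesis
      using standardized_less_of_samuelson by simp
  qed
  then show ?thesis
    unfolding score_oracle_def Phi_def by (subst Max_less_iff) auto
qed

lemma quantile_hat_less:
  fixes x :: "nat \<Rightarrow> real"
  assumes "\<And>i. i \<in> {1..n} \<Longrightarrow> x i < B" and "n \<ge> 1"
    and rank: "nat \<lceil>(1 - \<alpha>) * real (Suc n)\<rceil> \<le> n"
  shows "quantile_hat \<alpha> n x < ereal B"
proof -
  define xs where "xs = map (\<lambda>i. ereal (x i)) [1..<Suc n]"
  define k where "k = nat \<lceil>(1 - \<alpha>) * real (Suc n)\<rceil> - 1"
  have "sort (xs @ [\<infinity>]) = sort xs @ [\<infinity>]"
    by (rule properties_for_sort) (auto simp: sorted_append)
  moreover have "k < n"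
    using rank \<open>n \<ge> 1\<close> unfolding k_def by linarith
  then have k: "k < length (sort xs)" by (simp add: xs_def)
  ultimately have "quantile_hat \<alpha> n x = sort xs ! k"
    unfolding quantile_hat_def xs_def[symmetric] k_def[symmetric] by (simp add: nth_append)
  also have "sort xs ! k < ereal B"
    using nth_mem[OF k] assms(1) by (auto simp: xs_def)
  finally show ?thesis .
qed

lemma quantile_rank_le:
  assumes "0 < \<alpha>" and "real n \<ge> 1 / \<alpha> - 1"
  shows "nat \<lceil>(1 - \<alpha>) * real (Suc n)\<rceil> \<le> n"
proof -
  have "1 \<le> \<alpha> * (real n + 1)" using assms by (simp add: field_simps)
  then have "(1 - \<alpha>) * real (Suc n) \<le> real n" by (simp add: algebra_simps)
  then show ?thesis by simp
qed

theorem lemma3p2: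
  fixes M :: "'a measure" and E :: "nat \<Rightarrow> 'a \<Rightarrow> real ^ 'd::finite"
    and n :: nat and \<alpha> :: real
  assumes "prob_space M"
    and "n \<ge> 2"
    and "0 < \<alpha>" and "\<alpha> < 1"
    and rv: "\<And>i. i \<in> {1..Suc n} \<Longrightarrow> E i \<in> borel_measurable M"
    and exch: "\<And>\<pi>. \<pi> permutes {1..Suc n} \<Longrightarrow>
       distr M (PiM {1..Suc n} (\<lambda>_. borel)) (\<lambda>\<omega>. \<lambda>i\<in>{1..Suc n}. E (\<pi> i) \<omega>) =
       distr M (PiM {1..Suc n} (\<lambda>_. borel)) (\<lambda>\<omega>. \<lambda>i\<in>{1..Suc n}. E i \<omega>)"
    and no_atoms: "\<And>i j x. i \<in> {1..Suc n} \<Longrightarrow>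
       measure M {\<omega> \<in> space M. E i \<omega> $ j = x} = 0"
    and nonneg: "\<And>i j. i \<in> {1..Suc n} \<Longrightarrow> AE \<omega> in M. E i \<omega> $ j \<ge> 0"
    and mean_fin: "\<And>i j. i \<in> {1..Suc n} \<Longrightarrow> integrable M (\<lambda>\<omega>. E i \<omega> $ j)"
    and var_fin: "\<And>i j. i \<in> {1..Suc n} \<Longrightarrow> integrable M (\<lambda>\<omega>. (E i \<omega> $ j)\<^sup>2)"
    and var_pos: "\<And>i j. i \<in> {1..Suc n} \<Longrightarrow>
       prob_space.variance M (\<lambda>\<omega>. E i \<omega> $ j) > 0"
    and distinct: "\<And>j. AE \<omega> in M. \<forall>i\<in>{1..Suc n}. \<forall>k\<in>{1..Suc n}.
       i \<noteq> k \<longrightarrow> E i \<omega> $ j \<noteq> E k \<omega> $ j"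
    and n_large: "real n \<ge> 1 / \<alpha> - 1"
  shows "AE \<omega> in M. Q_oracle \<alpha> n (\<lambda>i. E i \<omega>) < ereal (real n / sqrt (real (Suc n)))"
proof -
  have "AE \<omega> in M. \<forall>j. inj_on (\<lambda>i. E i \<omega> $ j) {1..Suc n}"
    by (rule eventually_all_finite, rule eventually_mono[OF distinct]) (auto simp: inj_on_def)
  then show ?thesis
  proof eventually_elim
    case (elim \<omega>)
    then have "score_oracle n (\<lambda>i. E i \<omega>) i < real n / sqrt (real (Suc n))"
      if "i \<in> {1..n}" for i
      using score_oracle_less[where E = "\<lambda>i. E i \<omega>", OF \<open>n \<ge> 2\<close>] that by simp
    then show ?case
      unfolding Q_oracle_def using \<open>n \<ge> 2\<close> quantile_rank_le[OF \<open>0 < \<alpha>\<close> n_large]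
      by (intro quantile_hat_less) auto
  qed
qed

end
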